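(* Let $\mu>0$, $\Omega\subseteq\Lambda$, and $V:\Omega\to\mathbb{R}$ with $\frac12\mu\le V(x)\le\mu$ for all $x\in\Omega$. Let $\chi=\mathbb{1}[-\Delta_\Omega-V<0]$ (spectral projection on $\mathbb{C}^\Omega$) and $\rho_\chi(x)=\chi_{x,x}$. Then for every $x\in\Omega$ and every $\beta>0$, $$\rho_\chi(x)\ \ge\ e^{-\beta\mu/2}\Big[\big(e^{\beta\Delta_\Omega}\big)_{x,x}-e^{-\beta\mu/2}\Big].$$
   Context: $\Lambda=\mathbb{Z}_L^d$; $T_{x,y}=1$ if $|x-y|_1=1$, else $0$; $\Delta_{x,y}=T_{x,y}-2d\delta_{x,y}$; $\Delta_\Omega=P_\Omega\Delta P_\Omega$ regarded as an operator on $\mathbb{C}^\Omega$; $V$ acts as a diagonal multiplication operator. *)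

theory Defs
  imports "HOL-Analysis.Analysis"
begin

definition torus :: "nat \<Rightarrow> nat \<Rightarrow> int list set" where
  "torus L d = {x. length x = d \<and> (\<forall>i<d. 0 \<le> x ! i \<and> x ! i < int L)}"

definition cdist :: "nat \<Rightarrow> int \<Rightarrow> int \<Rightarrow> int" where
  "cdist L a b = min ((a - b) mod int L) ((b - a) mod int L)"

definition tdist1 :: "nat \<Rightarrow> nat \<Rightarrow> int list \<Rightarrow> int list \<Rightarrow> int" where
  "tdist1 L d x y = (\<Sum>i<d. cdist L (x ! i) (y ! i))"

definition hop :: "nat \<Rightarrow> nat \<Rightarrow> int list \<Rightarrow> int list \<Rightarrow> real" where
  "hop L d x y = (if tdist1 L d x y = 1 then 1 else 0)"

definition lap :: "nat \<Rightarrow> nat \<Rightarrow> int list \<Rightarrow> int list \<Rightarrow> real" where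
  "lap L d x y = hop L d x y - 2 * real d * (if x = y then 1 else 0)"

text \<open>Matrices on \<open>\<Omega>\<close> are functions \<open>'a \<Rightarrow> 'a \<Rightarrow> 'b\<close>, only their values on
  \<open>\<Omega> \<times> \<Omega>\<close> being relevant (this realizes the compression \<open>P_\<Omega> A P_\<Omega>\<close>).\<close>
definition mat_mult :: "'a set \<Rightarrow> ('a \<Rightarrow> 'a \<Rightarrow> 'b::comm_ring_1) \<Rightarrow> ('a \<Rightarrow> 'a \<Rightarrow> 'b) \<Rightarrow> 'a \<Rightarrow> 'a \<Rightarrow> 'b" where
  "mat_mult \<Omega> A B x y = (\<Sum>z\<in>\<Omega>. A x z * B z y)"

primrec mat_pow :: "'a set \<Rightarrow> ('a \<Rightarrow> 'a \<Rightarrow> 'b::comm_ring_1) \<Rightarrow> nat \<Rightarrow> 'a \<Rightarrow> 'a \<Rightarrow> 'b" where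
  "mat_pow \<Omega> A 0 = (\<lambda>x y. if x = y then 1 else 0)"
| "mat_pow \<Omega> A (Suc n) = mat_mult \<Omega> A (mat_pow \<Omega> A n)"

definition mat_exp :: "'a set \<Rightarrow> ('a \<Rightarrow> 'a \<Rightarrow> real) \<Rightarrow> 'a \<Rightarrow> 'a \<Rightarrow> real" where
  "mat_exp \<Omega> A x y = (\<Sum>n. mat_pow \<Omega> A n x y / fact n)"

definition cinner :: "'a set \<Rightarrow> ('a \<Rightarrow> complex) \<Rightarrow> ('a \<Rightarrow> complex) \<Rightarrow> complex" where
  "cinner \<Omega> v w = (\<Sum>x\<in>\<Omega>. v x * cnj (w x))"

definition eigenbasis :: "'a set \<Rightarrow> ('a \<Rightarrow> 'a \<Rightarrow> complex) \<Rightarrow> ('a \<Rightarrow> 'a \<Rightarrow> complex) \<Rightarrow> ('a \<Rightarrow> real) \<Rightarrow> bool" where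
  "eigenbasis \<Omega> H b lam \<longleftrightarrow>
     (\<forall>i\<in>\<Omega>. \<forall>j\<in>\<Omega>. cinner \<Omega> (b i) (b j) = (if i = j then 1 else 0)) \<and>
     (\<forall>i\<in>\<Omega>. \<forall>x\<in>\<Omega>. (\<Sum>y\<in>\<Omega>. H x y * b i y) = complex_of_real (lam i) * b i x)"

text \<open>Spectral projection \<open>\<one>[H < 0]\<close> of a Hermitian matrix H on \<open>\<complex>^\<Omega>\<close>:
  the sum of the rank-one projections onto the eigenvectors with negative eigenvalue
  (independent of the chosen orthonormal eigenbasis).\<close>
definition neg_spectral_proj :: "'a set \<Rightarrow> ('a \<Rightarrow> 'a \<Rightarrow> complex) \<Rightarrow> 'a \<Rightarrow> 'a \<Rightarrow> complex" where
  "neg_spectral_proj \<Omega> H x y =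
     (let (b, lam) = (SOME (b, lam). eigenbasis \<Omega> H b lam)
      in \<Sum>i\<in>{i\<in>\<Omega>. lam i < 0}. b i x * cnj (b i y))"

end

(*
  Write H = -\<Delta>_\<Omega> - V and expand in an orthonormal eigenbasis (b_i, \<lambda>_i) of H: then
  \<rho>(x) = \<Sum>_{\<lambda>_i < 0} |b_i(x)|^2 and (e^{-\<beta>H})_{xx} = \<Sum>_i e^{-\<beta>\<lambda>_i} |b_i(x)|^2,
  where \<Sum>_i |b_i(x)|^2 = 1.  Every vertex has at most 2d neighbours, so by Gershgorin
  every \<lambda>_i \<ge> -max V \<ge> -\<mu>, whence (e^{-\<beta>H})_{xx} \<le> e^{\<beta>\<mu>} \<rho>(x) + 1.
  On the other hand -\<beta>H = \<beta>\<Delta>_\<Omega> + \<beta>V dominates \<beta>\<Delta>_\<Omega> + \<beta>\<mu>/2 entrywise, and after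
  adding a multiple of the identity both are entrywise nonnegative matrices, for which the
  exponential is monotone: e^{\<beta>\<mu>/2} (e^{\<beta>\<Delta>_\<Omega>})_{xx} \<le> (e^{-\<beta>H})_{xx}.  As \<chi> is defined through an eigenbasis, the
  spectral theorem for real symmetric matrices is needed; it follows by maximising the
  quadratic form on unit spheres of successive orthogonal complements.
*)

theory Submission
  imports Defs
begin

section \<open>Spectral theorem for real symmetric matrices\<close>

definition rinner :: "'a set \<Rightarrow> ('a \<Rightarrow> real) \<Rightarrow> ('a \<Rightarrow> real) \<Rightarrow> real" where
  "rinner \<Omega> f g = (\<Sum>y\<in>\<Omega>. f y * g y)"

definition mat_vec :: "'a set \<Rightarrow> ('a \<Rightarrow> 'a \<Rightarrow> real) \<Rightarrow> ('a \<Rightarrow> real) \<Rightarrow> 'a \<Rightarrow> real" where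
  "mat_vec \<Omega> A f y = (\<Sum>z\<in>\<Omega>. A y z * f z)"

lemma rinner_commute: "rinner \<Omega> f g = rinner \<Omega> g f"
  by (simp add: rinner_def mult.commute)

lemma rinner_add_scaled_left:
  "rinner \<Omega> (\<lambda>y. f y + t * g y) h = rinner \<Omega> f h + t * rinner \<Omega> g h"
  by (simp add: rinner_def sum.distrib sum_distrib_left algebra_simps)

lemma rinner_add_scaled_right:
  "rinner \<Omega> h (\<lambda>y. f y + t * g y) = rinner \<Omega> h f + t * rinner \<Omega> h g"
  by (simp add: rinner_def sum.distrib sum_distrib_left algebra_simps)

lemma rinner_divide_left: "rinner \<Omega> (\<lambda>y. f y / c) g = rinner \<Omega> f g / c"
  by (simp add: rinner_def sum_divide_distrib)

lemma rinner_divide_right: "rinner \<Omega> f (\<lambda>y. g y / c) = rinner \<Omega> f g / c"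
  by (simp add: rinner_def sum_divide_distrib)

lemma rinner_self_nonneg: "rinner \<Omega> f f \<ge> 0"
  by (simp add: rinner_def sum_nonneg)

lemma rinner_self_eq_0D:
  assumes "finite \<Omega>" "rinner \<Omega> f f = 0" "y \<in> \<Omega>"
  shows "f y = 0"
  using sum_nonneg_eq_0_iff[OF assms(1), of "\<lambda>y. f y * f y"] assms(2,3) by (simp add: rinner_def)

lemma mat_vec_add_scaled:
  "mat_vec \<Omega> A (\<lambda>y. f y + t * g y) = (\<lambda>y. mat_vec \<Omega> A f y + t * mat_vec \<Omega> A g y)"
  by (rule ext) (simp add: mat_vec_def sum.distrib sum_distrib_left algebra_simps)

lemma mat_vec_divide: "mat_vec \<Omega> A (\<lambda>y. f y / c) = (\<lambda>y. mat_vec \<Omega> A f y / c)"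
  by (rule ext) (simp add: mat_vec_def sum_divide_distrib)

lemma rinner_mat_vec_symmetric:
  assumes sym: "\<forall>y\<in>\<Omega>. \<forall>z\<in>\<Omega>. A y z = A z y"
  shows "rinner \<Omega> (mat_vec \<Omega> A f) g = rinner \<Omega> f (mat_vec \<Omega> A g)"
proof -
  have "rinner \<Omega> (mat_vec \<Omega> A f) g = (\<Sum>y\<in>\<Omega>. \<Sum>z\<in>\<Omega>. A y z * f z * g y)"
    by (simp add: rinner_def mat_vec_def sum_distrib_right)
  also have "\<dots> = (\<Sum>z\<in>\<Omega>. \<Sum>y\<in>\<Omega>. f z * (A z y * g y))"
    using sym by (subst sum.swap) (auto intro!: sum.cong)
  finally show ?thesis by (simp add: rinner_def mat_vec_def sum_distrib_left)
qed

lemma quadratic_form_add_scaled: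
  assumes "\<forall>y\<in>\<Omega>. \<forall>z\<in>\<Omega>. A y z = A z y"
  shows "rinner \<Omega> (\<lambda>y. f y + t * g y) (mat_vec \<Omega> A (\<lambda>y. f y + t * g y))
    = rinner \<Omega> f (mat_vec \<Omega> A f) + 2 * t * rinner \<Omega> g (mat_vec \<Omega> A f)
      + t\<^sup>2 * rinner \<Omega> g (mat_vec \<Omega> A g)"
  using rinner_mat_vec_symmetric[OF assms, of g f] rinner_commute[of \<Omega> f]
  unfolding mat_vec_add_scaled rinner_add_scaled_left rinner_add_scaled_right
  by (simp add: algebra_simps power2_eq_square)

lemma rinner_self_add_scaled:
  "rinner \<Omega> (\<lambda>y. f y + t * g y) (\<lambda>y. f y + t * g y)
    = rinner \<Omega> f f + 2 * t * rinner \<Omega> g f + t\<^sup>2 * rinner \<Omega> g g"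
  unfolding rinner_add_scaled_left rinner_add_scaled_right
  using rinner_commute[of \<Omega> f g] by (simp add: algebra_simps power2_eq_square)

lemma continuous_on_quadratic_form:
  "continuous_on K (\<lambda>f. rinner \<Omega> f (mat_vec \<Omega> A f))"
proof -
  have "continuous_on UNIV (\<lambda>f::'a \<Rightarrow> real. f y)" for y by simp
  then have "continuous_on K (\<lambda>f::'a \<Rightarrow> real. f y)" for y using continuous_on_subset by blast
  then show ?thesis unfolding rinner_def mat_vec_def by (intro continuous_intros)
qed

definition orth_sphere :: "'a set \<Rightarrow> 'i set \<Rightarrow> ('i \<Rightarrow> 'a \<Rightarrow> real) \<Rightarrow> ('a \<Rightarrow> real) set" where
  "orth_sphere \<Omega> S v = {f. (\<forall>y. y \<notin> \<Omega> \<longrightarrow> f y = 0) \<and> rinner \<Omega> f f = 1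
                            \<and> (\<forall>i\<in>S. rinner \<Omega> f (v i) = 0)}"

lemma compact_orth_sphere:
  assumes fin: "finite \<Omega>"
  shows "compact (orth_sphere \<Omega> S v)" (is "compact ?K")
proof -
  define C where "C y = (if y \<in> \<Omega> then {-1..1::real} else {0})" for y
  have "compactin (product_topology (\<lambda>_. euclidean) UNIV) (Pi\<^sub>E UNIV C)"
    by (subst compactin_PiE) (auto simp: C_def)
  then have box: "compact (Pi\<^sub>E UNIV C)" by (simp add: euclidean_product_topology)
  have bounded: "?K \<subseteq> Pi\<^sub>E UNIV C"
  proof
    fix f assume f: "f \<in> ?K"
    then have f_supp: "\<forall>y. y \<notin> \<Omega> \<longrightarrow> f y = 0" and f_unit: "rinner \<Omega> f f = 1"
      by (simp_all add: orth_sphere_def)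
    have "\<bar>f y\<bar> \<le> 1" if y: "y \<in> \<Omega>" for y
    proof -
      have "(f y)\<^sup>2 \<le> rinner \<Omega> f f"
        unfolding rinner_def power2_eq_square using fin y by (intro member_le_sum) auto
      then show ?thesis using f_unit by (simp add: abs_square_le_1)
    qed
    then show "f \<in> Pi\<^sub>E UNIV C" using f_supp by (auto simp: C_def abs_le_iff)
  qed
  have "closed ?K"
    unfolding orth_sphere_def rinner_def Ball_def
    by (intro closed_Collect_conj closed_Collect_all closed_Collect_imp closed_Collect_eq
        open_Collect_const continuous_intros) auto
  with box have "compact (Pi\<^sub>E UNIV C \<inter> ?K)" by (rule compact_Int_closed)
  then show ?thesis using bounded by (simp add: Int_absorb1)
qed

lemma normalized_in_orth_sphere:
  assumes "\<forall>y. y \<notin> \<Omega> \<longrightarrow> h y = 0" and "\<forall>i\<in>S. rinner \<Omega> h (v i) = 0"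
    and "rinner \<Omega> h h \<noteq> 0"
  shows "(\<lambda>y. h y / sqrt (rinner \<Omega> h h)) \<in> orth_sphere \<Omega> S v"
  using assms rinner_self_nonneg[of \<Omega> h]
  by (simp add: orth_sphere_def rinner_divide_left rinner_divide_right real_sqrt_mult[symmetric])

text \<open>\<open>F y\<close> is \<open>\<delta>\<^sub>y\<close> minus its projection onto the span of the \<open>v i\<close>. If all of them vanished,
  the \<open>v i\<close> would span \<open>\<real>\<^sup>\<Omega>\<close>, and comparing traces would give \<open>card \<Omega> = card S\<close>.\<close>

lemma orth_sphere_nonempty:
  assumes fin: "finite \<Omega>" and finS: "finite S" and card: "card S < card \<Omega>"
    and on: "\<forall>i\<in>S. \<forall>j\<in>S. rinner \<Omega> (v i) (v j) = (if i = j then 1 else 0)"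
  shows "orth_sphere \<Omega> S v \<noteq> {}"
proof -
  define F where "F y z = (if z \<in> \<Omega> then (if z = y then 1 else 0) - (\<Sum>i\<in>S. v i y * v i z) else 0)"
    for y z
  have F_orth: "rinner \<Omega> (F y) (v j) = 0" if y: "y \<in> \<Omega>" and j: "j \<in> S" for y j
  proof -
    have "rinner \<Omega> (F y) (v j)
        = (\<Sum>z\<in>\<Omega>. (if z = y then v j z else 0) - (\<Sum>i\<in>S. v i y * (v i z * v j z)))"
      unfolding rinner_def by (intro sum.cong) (auto simp: F_def left_diff_distrib sum_distrib_right mult.assoc)
    also have "\<dots> = v j y - (\<Sum>i\<in>S. v i y * rinner \<Omega> (v i) (v j))"
      using fin y by (simp add: sum_subtractf rinner_def sum_distrib_left sum.swap[of _ \<Omega> S])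
    also have "(\<Sum>i\<in>S. v i y * rinner \<Omega> (v i) (v j)) = (\<Sum>i\<in>S. if i = j then v i y else 0)"
      using on j by (intro sum.cong) auto
    also have "\<dots> = v j y" using finS j by simp
    finally show ?thesis by simp
  qed
  have "\<exists>y\<in>\<Omega>. rinner \<Omega> (F y) (F y) \<noteq> 0"
  proof (rule ccontr)
    assume "\<not> ?thesis"
    then have "F y y = 0" if "y \<in> \<Omega>" for y using rinner_self_eq_0D[OF fin _ that] that by blast
    then have "(\<Sum>i\<in>S. (v i y)\<^sup>2) = 1" if "y \<in> \<Omega>" for y
      using that by (simp add: F_def power2_eq_square)
    then have "real (card \<Omega>) = (\<Sum>y\<in>\<Omega>. \<Sum>i\<in>S. (v i y)\<^sup>2)" by simp
    also have "\<dots> = (\<Sum>i\<in>S. rinner \<Omega> (v i) (v i))"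
      by (simp add: rinner_def power2_eq_square) (rule sum.swap)
    also have "\<dots> = real (card S)" using on by simp
    finally show False using card by simp
  qed
  then obtain y where y: "y \<in> \<Omega>" and F_nz: "rinner \<Omega> (F y) (F y) \<noteq> 0" ..
  have "\<forall>z. z \<notin> \<Omega> \<longrightarrow> F y z = 0" by (simp add: F_def)
  with F_orth[OF y] F_nz have "(\<lambda>z. F y z / sqrt (rinner \<Omega> (F y) (F y))) \<in> orth_sphere \<Omega> S v"
    by (intro normalized_in_orth_sphere) auto
  then show ?thesis by blast
qed

lemma rayleigh_le_max_on_orth_sphere:
  assumes fin: "finite \<Omega>"
    and u_max: "\<forall>f\<in>orth_sphere \<Omega> S v. rinner \<Omega> f (mat_vec \<Omega> A f) \<le> rinner \<Omega> u (mat_vec \<Omega> A u)"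
    and h_supp: "\<forall>y. y \<notin> \<Omega> \<longrightarrow> h y = 0" and h_orth: "\<forall>i\<in>S. rinner \<Omega> h (v i) = 0"
  shows "rinner \<Omega> h (mat_vec \<Omega> A h) \<le> rinner \<Omega> u (mat_vec \<Omega> A u) * rinner \<Omega> h h"
proof (cases "rinner \<Omega> h h = 0")
  case True
  then have "\<forall>y\<in>\<Omega>. h y = 0" using rinner_self_eq_0D[OF fin] by blast
  then show ?thesis by (simp add: True rinner_def)
next
  case False
  define r where "r = sqrt (rinner \<Omega> h h)"
  have r: "r > 0" using False rinner_self_nonneg[of \<Omega> h] by (simp add: r_def)
  have "(\<lambda>y. h y / r) \<in> orth_sphere \<Omega> S v"
    unfolding r_def using h_supp h_orth False by (rule normalized_in_orth_sphere)
  then have "rinner \<Omega> (\<lambda>y. h y / r) (mat_vec \<Omega> A (\<lambda>y. h y / r)) \<le> rinner \<Omega> u (mat_vec \<Omega> A u)"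
    using u_max by blast
  then have "rinner \<Omega> h (mat_vec \<Omega> A h) / r\<^sup>2 \<le> rinner \<Omega> u (mat_vec \<Omega> A u)"
    by (simp add: mat_vec_divide rinner_divide_left rinner_divide_right power2_eq_square)
  then show ?thesis using r False rinner_self_nonneg[of \<Omega> h] by (simp add: r_def field_simps)
qed

lemma quadratic_nonpos_imp_linear_coeff_0:
  fixes B C :: real
  assumes "\<And>t. 2 * t * B + t\<^sup>2 * C \<le> 0"
  shows "B = 0"
proof -
  define D where "D = \<bar>C\<bar> + 1"
  have D: "D > 0" "D + C \<ge> 0" unfolding D_def by auto
  define t where "t = B / D"
  have "2 * t * B + t\<^sup>2 * C = B\<^sup>2 / D + t\<^sup>2 * (D + C)"
    using D by (simp add: t_def field_simps power2_eq_square)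
  moreover have "t\<^sup>2 * (D + C) \<ge> 0" using D by simp
  ultimately have "B\<^sup>2 / D \<le> 0" using assms[of t] by linarith
  then have "B\<^sup>2 \<le> 0" using D by (simp add: divide_le_0_iff)
  then show ?thesis by simp
qed

lemma rayleigh_first_variation:
  assumes sym: "\<forall>y\<in>\<Omega>. \<forall>z\<in>\<Omega>. A y z = A z y" and u_unit: "rinner \<Omega> u u = 1"
    and le: "\<And>t. rinner \<Omega> (\<lambda>y. u y + t * w y) (mat_vec \<Omega> A (\<lambda>y. u y + t * w y))
                \<le> rinner \<Omega> u (mat_vec \<Omega> A u) * rinner \<Omega> (\<lambda>y. u y + t * w y) (\<lambda>y. u y + t * w y)"
  shows "rinner \<Omega> w (mat_vec \<Omega> A u) = rinner \<Omega> u (mat_vec \<Omega> A u) * rinner \<Omega> w u"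
proof -
  define a where "a = rinner \<Omega> u (mat_vec \<Omega> A u)"
  have "2 * t * (rinner \<Omega> w (mat_vec \<Omega> A u) - a * rinner \<Omega> w u)
          + t\<^sup>2 * (rinner \<Omega> w (mat_vec \<Omega> A w) - a * rinner \<Omega> w w) \<le> 0" for t
    using le[of t] unfolding quadratic_form_add_scaled[OF sym] rinner_self_add_scaled u_unit a_def[symmetric]
    by (simp add: algebra_simps power2_eq_square)
  then have "rinner \<Omega> w (mat_vec \<Omega> A u) - a * rinner \<Omega> w u = 0"
    by (rule quadratic_nonpos_imp_linear_coeff_0)
  then show ?thesis unfolding a_def by simp
qed

text \<open>A maximiser \<open>u\<close> of the quadratic form on \<open>orth_sphere \<Omega> S v\<close> is an eigenvector: the
  orthogonal complement of the eigenvectors \<open>v i\<close> is \<open>A\<close>-invariant, so \<open>w = A u - a u\<close> lies in it,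
  and the first variation of the Rayleigh quotient in direction \<open>w\<close> is \<open>\<langle>w, w\<rangle>\<close>.\<close>

lemma exists_orthogonal_eigenvector:
  fixes A :: "'a \<Rightarrow> 'a \<Rightarrow> real"
  assumes fin: "finite \<Omega>" and finS: "finite S" and card: "card S < card \<Omega>"
    and sym: "\<forall>y\<in>\<Omega>. \<forall>z\<in>\<Omega>. A y z = A z y"
    and on: "\<forall>i\<in>S. \<forall>j\<in>S. rinner \<Omega> (v i) (v j) = (if i = j then 1 else 0)"
    and ev: "\<forall>i\<in>S. \<forall>y\<in>\<Omega>. mat_vec \<Omega> A (v i) y = lam i * v i y"
  shows "\<exists>u l. rinner \<Omega> u u = 1 \<and> (\<forall>i\<in>S. rinner \<Omega> u (v i) = 0)
              \<and> (\<forall>y\<in>\<Omega>. mat_vec \<Omega> A u y = l * u y)"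
proof -
  obtain u where "u \<in> orth_sphere \<Omega> S v"
    and u_max: "\<forall>f\<in>orth_sphere \<Omega> S v. rinner \<Omega> f (mat_vec \<Omega> A f) \<le> rinner \<Omega> u (mat_vec \<Omega> A u)"
    using continuous_attains_sup[OF compact_orth_sphere[OF fin] orth_sphere_nonempty[OF fin finS card on]
        continuous_on_quadratic_form] by blast
  then have u_supp: "\<forall>y. y \<notin> \<Omega> \<longrightarrow> u y = 0" and u_unit: "rinner \<Omega> u u = 1"
    and u_orth: "\<forall>i\<in>S. rinner \<Omega> u (v i) = 0"
    by (simp_all add: orth_sphere_def)
  define a where "a = rinner \<Omega> u (mat_vec \<Omega> A u)"
  define w where "w y = (if y \<in> \<Omega> then mat_vec \<Omega> A u y - a * u y else 0)" for y
  have w_rinner: "rinner \<Omega> w g = rinner \<Omega> (mat_vec \<Omega> A u) g - a * rinner \<Omega> u g" for g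
    by (simp add: rinner_def w_def left_diff_distrib sum_subtractf sum_distrib_left mult.assoc)
  have w_supp: "\<forall>y. y \<notin> \<Omega> \<longrightarrow> w y = 0" by (simp add: w_def)
  have w_orth: "\<forall>i\<in>S. rinner \<Omega> w (v i) = 0"
  proof
    fix i assume i: "i \<in> S"
    have "rinner \<Omega> (mat_vec \<Omega> A u) (v i) = lam i * rinner \<Omega> u (v i)"
      unfolding rinner_mat_vec_symmetric[OF sym] using ev i
      by (simp add: rinner_def sum_distrib_left mult.left_commute)
    then show "rinner \<Omega> w (v i) = 0" using u_orth i by (simp add: w_rinner)
  qed
  have "rinner \<Omega> w (mat_vec \<Omega> A u) = a * rinner \<Omega> w u"
    unfolding a_def using sym u_unit
  proof (rule rayleigh_first_variation)
    fix t
    show "rinner \<Omega> (\<lambda>y. u y + t * w y) (mat_vec \<Omega> A (\<lambda>y. u y + t * w y))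
        \<le> rinner \<Omega> u (mat_vec \<Omega> A u) * rinner \<Omega> (\<lambda>y. u y + t * w y) (\<lambda>y. u y + t * w y)"
      using u_supp u_orth w_supp w_orth
      by (intro rayleigh_le_max_on_orth_sphere[OF fin u_max]) (simp_all add: rinner_add_scaled_left)
  qed
  moreover have "rinner \<Omega> w w = rinner \<Omega> w (mat_vec \<Omega> A u) - a * rinner \<Omega> w u"
    using w_rinner[of w] rinner_commute[of \<Omega> w] by metis
  ultimately have "rinner \<Omega> w w = 0" by simp
  then have "\<forall>y\<in>\<Omega>. mat_vec \<Omega> A u y = a * u y"
    using rinner_self_eq_0D[OF fin] by (fastforce simp: w_def)
  then show ?thesis using u_unit u_orth by blast
qed

lemma orthonormal_eigenvectors_exist:
  fixes A :: "'a \<Rightarrow> 'a \<Rightarrow> real"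
  assumes fin: "finite \<Omega>" and sym: "\<forall>y\<in>\<Omega>. \<forall>z\<in>\<Omega>. A y z = A z y" and S: "S \<subseteq> \<Omega>"
  shows "\<exists>v lam. (\<forall>i\<in>S. \<forall>j\<in>S. rinner \<Omega> (v i) (v j) = (if i = j then 1 else 0))
                 \<and> (\<forall>i\<in>S. \<forall>y\<in>\<Omega>. mat_vec \<Omega> A (v i) y = lam i * v i y)"
  using finite_subset[OF S fin] S
proof (induction rule: finite_subset_induct')
  case empty
  show ?case by simp
next
  case (insert k S)
  then obtain v lam
    where on: "\<forall>i\<in>S. \<forall>j\<in>S. rinner \<Omega> (v i) (v j) = (if i = j then 1 else 0)"
      and ev: "\<forall>i\<in>S. \<forall>y\<in>\<Omega>. mat_vec \<Omega> A (v i) y = lam i * v i y"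
    by blast
  have "S \<subset> \<Omega>" using insert.hyps(2-4) by blast
  then have "card S < card \<Omega>" by (rule psubset_card_mono[OF fin])
  then obtain u l where u_unit: "rinner \<Omega> u u = 1" and u_orth: "\<forall>i\<in>S. rinner \<Omega> u (v i) = 0"
    and u_ev: "\<forall>y\<in>\<Omega>. mat_vec \<Omega> A u y = l * u y"
    using exists_orthogonal_eigenvector[OF fin insert.hyps(1) _ sym on ev] by blast
  have "rinner \<Omega> ((v(k := u)) i) ((v(k := u)) j) = (if i = j then 1 else 0)"
    if "i \<in> insert k S" "j \<in> insert k S" for i j
  proof -
    have "\<forall>i\<in>S. rinner \<Omega> (v i) u = 0" using u_orth by (simp add: rinner_commute)
    then show ?thesis
      using that on u_unit u_orth insert.hyps(4) by (cases "i = k"; cases "j = k") simp_all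
  qed
  moreover have "mat_vec \<Omega> A ((v(k := u)) i) y = (lam(k := l)) i * (v(k := u)) i y"
    if "i \<in> insert k S" "y \<in> \<Omega>" for i y
    using that ev u_ev by (cases "i = k") simp_all
  ultimately show ?case by blast
qed

theorem symmetric_matrix_eigenbasis:
  fixes A :: "'a \<Rightarrow> 'a \<Rightarrow> real"
  assumes fin: "finite \<Omega>" and sym: "\<forall>y\<in>\<Omega>. \<forall>z\<in>\<Omega>. A y z = A z y"
  shows "\<exists>b lam. eigenbasis \<Omega> (\<lambda>y z. of_real (A y z)) b lam"
proof -
  obtain v lam where on: "\<forall>i\<in>\<Omega>. \<forall>j\<in>\<Omega>. rinner \<Omega> (v i) (v j) = (if i = j then 1 else 0)"
    and ev: "\<forall>i\<in>\<Omega>. \<forall>y\<in>\<Omega>. mat_vec \<Omega> A (v i) y = lam i * v i y"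
    using orthonormal_eigenvectors_exist[OF fin sym order_refl] by blast
  have "eigenbasis \<Omega> (\<lambda>y z. of_real (A y z)) (\<lambda>i y. of_real (v i y)) lam"
    using on ev by (simp add: eigenbasis_def cinner_def rinner_def mat_vec_def flip: of_real_mult of_real_sum)
  then show ?thesis by blast
qed

section \<open>Spectral calculus in an orthonormal eigenbasis\<close>

lemma of_real_sum_norm_square:
  "complex_of_real (\<Sum>i\<in>A. (cmod (f i))\<^sup>2) = (\<Sum>i\<in>A. f i * cnj (f i))"
  by (simp only: of_real_sum complex_norm_square)

lemma orthonormal_bessel_identity:
  fixes b :: "'a \<Rightarrow> 'a \<Rightarrow> complex"
  assumes fin: "finite \<Omega>"
    and on: "\<forall>i\<in>\<Omega>. \<forall>j\<in>\<Omega>. cinner \<Omega> (b i) (b j) = (if i = j then 1 else 0)"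
    and z: "z \<in> \<Omega>"
  shows "(\<Sum>y\<in>\<Omega>. (cmod ((if y = z then 1 else 0) - (\<Sum>i\<in>\<Omega>. cnj (b i z) * b i y)))\<^sup>2)
       = 1 - (\<Sum>i\<in>\<Omega>. (cmod (b i z))\<^sup>2)"
proof -
  define s where "s = (\<Sum>i\<in>\<Omega>. (cmod (b i z))\<^sup>2)"
  define h where "h y = (\<Sum>i\<in>\<Omega>. cnj (b i z) * b i y)" for y
  have hz: "h z = of_real s"
    unfolding h_def s_def of_real_sum_norm_square by (simp add: mult.commute)
  have "(\<Sum>y\<in>\<Omega>. h y * cnj (h y))
      = (\<Sum>y\<in>\<Omega>. \<Sum>i\<in>\<Omega>. \<Sum>j\<in>\<Omega>. b i z * cnj (b j z) * (b j y * cnj (b i y)))"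
    unfolding h_def by (simp add: sum_distrib_left sum_distrib_right mult_ac)
  also have "\<dots> = (\<Sum>i\<in>\<Omega>. \<Sum>j\<in>\<Omega>. \<Sum>y\<in>\<Omega>. b i z * cnj (b j z) * (b j y * cnj (b i y)))"
    by (subst sum.swap) (rule sum.cong[OF refl], rule sum.swap)
  also have "\<dots> = (\<Sum>i\<in>\<Omega>. \<Sum>j\<in>\<Omega>. b i z * cnj (b j z) * cinner \<Omega> (b j) (b i))"
    unfolding cinner_def by (simp add: sum_distrib_left)
  also have "\<dots> = (\<Sum>i\<in>\<Omega>. b i z * cnj (b i z))"
  proof (rule sum.cong[OF refl])
    fix i assume i: "i \<in> \<Omega>"
    have "(\<Sum>j\<in>\<Omega>. b i z * cnj (b j z) * cinner \<Omega> (b j) (b i))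
        = (\<Sum>j\<in>\<Omega>. if j = i then b i z * cnj (b j z) else 0)"
      using on i by (intro sum.cong) auto
    then show "(\<Sum>j\<in>\<Omega>. b i z * cnj (b j z) * cinner \<Omega> (b j) (b i)) = b i z * cnj (b i z)"
      using fin i by simp
  qed
  also have "\<dots> = of_real s"
    unfolding s_def of_real_sum_norm_square ..
  finally have hh: "(\<Sum>y\<in>\<Omega>. h y * cnj (h y)) = of_real s" .
  have "of_real (\<Sum>y\<in>\<Omega>. (cmod ((if y = z then 1 else 0) - h y))\<^sup>2)
      = (\<Sum>y\<in>\<Omega>. (if y = z then 1 - h y - cnj (h y) else 0) + h y * cnj (h y))"
    unfolding of_real_sum_norm_square by (rule sum.cong) (auto simp: algebra_simps)
  also have "\<dots> = of_real (1 - s)"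
    using fin z by (simp add: sum.distrib hh hz)
  finally show ?thesis by (simp only: of_real_eq_iff h_def s_def)
qed

text \<open>By Bessel's identity every \<open>s z = \<Sum>\<^sub>i |b i z|\<^sup>2\<close> is at most \<open>1\<close>, while \<open>\<Sum>\<^sub>z s z = card \<Omega>\<close> since
  there are \<open>card \<Omega>\<close> unit vectors; hence \<open>s z = 1\<close> and the Bessel residual vanishes.\<close>

lemma orthonormal_resolution_of_identity:
  fixes b :: "'a \<Rightarrow> 'a \<Rightarrow> complex"
  assumes fin: "finite \<Omega>"
    and on: "\<forall>i\<in>\<Omega>. \<forall>j\<in>\<Omega>. cinner \<Omega> (b i) (b j) = (if i = j then 1 else 0)"
    and x: "x \<in> \<Omega>" and y: "y \<in> \<Omega>"
  shows "(\<Sum>i\<in>\<Omega>. cnj (b i x) * b i y) = (if y = x then 1 else 0)"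
proof -
  define s where "s z = (\<Sum>i\<in>\<Omega>. (cmod (b i z))\<^sup>2)" for z
  define g where "g z y = (if y = z then 1 else 0) - (\<Sum>i\<in>\<Omega>. cnj (b i z) * b i y)" for z y
  have g_norm: "(\<Sum>y\<in>\<Omega>. (cmod (g z y))\<^sup>2) = 1 - s z" if "z \<in> \<Omega>" for z
    unfolding g_def s_def using fin on that by (rule orthonormal_bessel_identity)
  have "(\<Sum>z\<in>\<Omega>. s z) = (\<Sum>i\<in>\<Omega>. \<Sum>z\<in>\<Omega>. (cmod (b i z))\<^sup>2)"
    unfolding s_def by (rule sum.swap)
  also have "\<dots> = (\<Sum>i\<in>\<Omega>. 1)"
  proof (rule sum.cong[OF refl])
    fix i assume "i \<in> \<Omega>"
    then have "of_real (\<Sum>z\<in>\<Omega>. (cmod (b i z))\<^sup>2) = (1::complex)"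
      using on unfolding of_real_sum_norm_square cinner_def by simp
    then show "(\<Sum>z\<in>\<Omega>. (cmod (b i z))\<^sup>2) = 1" by (simp only: of_real_eq_1_iff)
  qed
  finally have "(\<Sum>z\<in>\<Omega>. 1 - s z) = 0" by (simp add: sum_subtractf)
  moreover have "1 - s z \<ge> 0" if "z \<in> \<Omega>" for z
    using g_norm[OF that] by (metis sum_nonneg zero_le_power2)
  ultimately have "\<forall>z\<in>\<Omega>. 1 - s z = 0"
    using sum_nonneg_eq_0_iff[OF fin, of "\<lambda>z. 1 - s z"] by blast
  then have "(\<Sum>y\<in>\<Omega>. (cmod (g x y))\<^sup>2) = 0" using g_norm[OF x] x by simp
  then have "\<forall>y\<in>\<Omega>. (cmod (g x y))\<^sup>2 = 0"
    using sum_nonneg_eq_0_iff[OF fin, of "\<lambda>y. (cmod (g x y))\<^sup>2"] by simp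
  then have "g x y = 0" using y by simp
  then show ?thesis unfolding g_def by simp
qed

lemma mat_pow_eigen_expansion:
  assumes fin: "finite \<Omega>" and eb: "eigenbasis \<Omega> (\<lambda>y z. of_real (M y z)) b lam"
    and x: "x \<in> \<Omega>" and y: "y \<in> \<Omega>"
  shows "of_real (mat_pow \<Omega> M n y x) = (\<Sum>i\<in>\<Omega>. of_real (lam i ^ n) * b i y * cnj (b i x))"
  using y
proof (induction n arbitrary: y)
  case 0
  then show ?case
    using orthonormal_resolution_of_identity[OF fin _ x] eb
    by (simp add: eigenbasis_def mult.commute)
next
  case (Suc n)
  have "of_real (mat_pow \<Omega> M (Suc n) y x)
      = (\<Sum>z\<in>\<Omega>. of_real (M y z) * (\<Sum>i\<in>\<Omega>. of_real (lam i ^ n) * b i z * cnj (b i x)))"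
    using Suc.IH by (simp add: mat_mult_def)
  also have "\<dots> = (\<Sum>i\<in>\<Omega>. of_real (lam i ^ n) * (\<Sum>z\<in>\<Omega>. of_real (M y z) * b i z) * cnj (b i x))"
    by (simp add: sum_distrib_left sum_distrib_right mult_ac) (rule sum.swap)
  also have "\<dots> = (\<Sum>i\<in>\<Omega>. of_real (lam i ^ Suc n) * b i y * cnj (b i x))"
    using eb Suc.prems by (intro sum.cong) (auto simp: eigenbasis_def)
  finally show ?case .
qed

lemma mat_exp_diag_eigen:
  assumes fin: "finite \<Omega>" and eb: "eigenbasis \<Omega> (\<lambda>y z. of_real (M y z)) b lam"
    and x: "x \<in> \<Omega>"
  shows "mat_exp \<Omega> M x x = (\<Sum>i\<in>\<Omega>. exp (lam i) * (cmod (b i x))\<^sup>2)"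
proof -
  have "complex_of_real (mat_pow \<Omega> M n x x) = of_real (\<Sum>i\<in>\<Omega>. lam i ^ n * (cmod (b i x))\<^sup>2)" for n
    unfolding mat_pow_eigen_expansion[OF fin eb x x] of_real_sum of_real_mult complex_norm_square
    by (simp only: mult.assoc)
  then have "(\<lambda>n. mat_pow \<Omega> M n x x / fact n) = (\<lambda>n. \<Sum>i\<in>\<Omega>. lam i ^ n / fact n * (cmod (b i x))\<^sup>2)"
    by (simp only: of_real_eq_iff sum_divide_distrib) simp
  moreover have "(\<lambda>n. lam i ^ n / fact n * (cmod (b i x))\<^sup>2) sums (exp (lam i) * (cmod (b i x))\<^sup>2)" for i
    using sums_mult2[OF exp_converges[of "lam i"], of "(cmod (b i x))\<^sup>2"] by (simp add: divide_inverse mult_ac)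
  ultimately have "(\<lambda>n. mat_pow \<Omega> M n x x / fact n) sums (\<Sum>i\<in>\<Omega>. exp (lam i) * (cmod (b i x))\<^sup>2)"
    by (simp add: sums_sum)
  then show ?thesis unfolding mat_exp_def by (rule sums_unique[symmetric])
qed

lemma eigenbasis_affine:
  assumes fin: "finite \<Omega>" and eb: "eigenbasis \<Omega> (\<lambda>y z. of_real (M y z)) b lam"
    and M': "\<forall>y\<in>\<Omega>. \<forall>z\<in>\<Omega>. M' y z = c * M y z + (if y = z then s else 0)"
  shows "eigenbasis \<Omega> (\<lambda>y z. of_real (M' y z)) b (\<lambda>i. c * lam i + s)"
  unfolding eigenbasis_def
proof (intro conjI ballI)
  fix i j assume "i \<in> \<Omega>" "j \<in> \<Omega>"
  then show "cinner \<Omega> (b i) (b j) = (if i = j then 1 else 0)"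
    using eb by (simp add: eigenbasis_def)
next
  fix i y assume i: "i \<in> \<Omega>" and y: "y \<in> \<Omega>"
  have "(\<Sum>z\<in>\<Omega>. of_real (M' y z) * b i z)
      = of_real c * (\<Sum>z\<in>\<Omega>. of_real (M y z) * b i z) + of_real s * b i y"
  proof -
    have "(\<Sum>z\<in>\<Omega>. of_real (M' y z) * b i z)
        = (\<Sum>z\<in>\<Omega>. of_real c * (of_real (M y z) * b i z) + (if z = y then of_real s * b i z else 0))"
      using M' y by (intro sum.cong) (auto simp: algebra_simps)
    then show ?thesis using fin y by (simp add: sum.distrib sum_distrib_left)
  qed
  also have "\<dots> = of_real (c * lam i + s) * b i y"
    using eb i y by (simp add: eigenbasis_def algebra_simps)
  finally show "(\<Sum>z\<in>\<Omega>. of_real (M' y z) * b i z) = of_real (c * lam i + s) * b i y" .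
qed

lemma neg_spectral_proj_diag:
  fixes H :: "'a \<Rightarrow> 'a \<Rightarrow> real"
  assumes "finite \<Omega>" and "\<forall>y\<in>\<Omega>. \<forall>z\<in>\<Omega>. H y z = H z y"
  shows "\<exists>b lam. eigenbasis \<Omega> (\<lambda>y z. of_real (H y z)) b lam
           \<and> Re (neg_spectral_proj \<Omega> (\<lambda>y z. of_real (H y z)) x x)
             = (\<Sum>i\<in>{i\<in>\<Omega>. lam i < 0}. (cmod (b i x))\<^sup>2)"
proof -
  define P where "P = (\<lambda>(b, lam). eigenbasis \<Omega> (\<lambda>y z. complex_of_real (H y z)) b lam)"
  obtain b lam where b_lam: "(SOME p. P p) = (b, lam)" by (cases "SOME p. P p")
  have "\<exists>p. P p" using symmetric_matrix_eigenbasis[OF assms] by (auto simp: P_def)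
  then have "P (b, lam)" unfolding b_lam[symmetric] by (rule someI_ex)
  moreover have "neg_spectral_proj \<Omega> (\<lambda>y z. of_real (H y z)) x x
      = of_real (\<Sum>i\<in>{i\<in>\<Omega>. lam i < 0}. (cmod (b i x))\<^sup>2)"
    unfolding neg_spectral_proj_def of_real_sum_norm_square using b_lam by (simp add: P_def)
  ultimately show ?thesis unfolding P_def by auto
qed

section \<open>Entrywise monotonicity of the matrix exponential\<close>

lemma mat_pow_abs_le:
  fixes M :: "'a \<Rightarrow> 'a \<Rightarrow> real"
  assumes fin: "finite \<Omega>" and x: "x \<in> \<Omega>"
  shows "\<bar>mat_pow \<Omega> M n x y\<bar> \<le> (\<Sum>u\<in>\<Omega>. \<Sum>v\<in>\<Omega>. \<bar>M u v\<bar>) ^ n"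
  using x
proof (induction n arbitrary: x)
  case 0
  then show ?case by simp
next
  case (Suc n)
  define C where "C = (\<Sum>u\<in>\<Omega>. \<Sum>v\<in>\<Omega>. \<bar>M u v\<bar>)"
  have row: "(\<Sum>z\<in>\<Omega>. \<bar>M x z\<bar>) \<le> C"
    unfolding C_def using fin Suc.prems by (intro member_le_sum) (auto intro: sum_nonneg)
  have "\<bar>mat_pow \<Omega> M (Suc n) x y\<bar> \<le> (\<Sum>z\<in>\<Omega>. \<bar>M x z\<bar> * \<bar>mat_pow \<Omega> M n z y\<bar>)"
    unfolding mat_pow.simps mat_mult_def abs_mult[symmetric] by (rule sum_abs)
  also have "\<dots> \<le> (\<Sum>z\<in>\<Omega>. \<bar>M x z\<bar> * C ^ n)"
    using Suc.IH by (intro sum_mono mult_left_mono) (auto simp: C_def)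
  also have "\<dots> \<le> C * C ^ n"
    using row by (simp add: sum_distrib_right[symmetric] mult_right_mono C_def sum_nonneg)
  finally show ?case by (simp add: C_def)
qed

lemma mat_exp_sums:
  fixes M :: "'a \<Rightarrow> 'a \<Rightarrow> real"
  assumes "finite \<Omega>" and "x \<in> \<Omega>"
  shows "(\<lambda>n. mat_pow \<Omega> M n x y / fact n) sums mat_exp \<Omega> M x y"
proof -
  define C where "C = (\<Sum>u\<in>\<Omega>. \<Sum>v\<in>\<Omega>. \<bar>M u v\<bar>)"
  have "summable (\<lambda>n. C ^ n / fact n)"
    using summable_exp[of C] by (simp add: divide_inverse mult.commute)
  moreover have "norm (mat_pow \<Omega> M n x y / fact n) \<le> C ^ n / fact n" for n
    using mat_pow_abs_le[OF assms] by (simp add: C_def divide_right_mono)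
  ultimately have "summable (\<lambda>n. mat_pow \<Omega> M n x y / fact n)"
    by (rule summable_comparison_test'[where N = 0])
  then show ?thesis unfolding mat_exp_def by (rule summable_sums)
qed

lemma mat_pow_mono:
  fixes A B :: "'a \<Rightarrow> 'a \<Rightarrow> real"
  assumes "\<forall>y\<in>\<Omega>. \<forall>z\<in>\<Omega>. 0 \<le> A y z \<and> A y z \<le> B y z" and "y \<in> \<Omega>" and "z \<in> \<Omega>"
  shows "0 \<le> mat_pow \<Omega> A n y z \<and> mat_pow \<Omega> A n y z \<le> mat_pow \<Omega> B n y z"
  using assms(2,3)
proof (induction n arbitrary: y)
  case 0
  then show ?case by simp
next
  case (Suc n)
  then show ?case
    using assms(1) unfolding mat_pow.simps mat_mult_def
    by (auto intro!: sum_nonneg sum_mono mult_mono intro: order_trans)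
qed

lemma mat_exp_mono:
  fixes A B :: "'a \<Rightarrow> 'a \<Rightarrow> real"
  assumes fin: "finite \<Omega>" and AB: "\<forall>y\<in>\<Omega>. \<forall>z\<in>\<Omega>. 0 \<le> A y z \<and> A y z \<le> B y z"
    and x: "x \<in> \<Omega>" and y: "y \<in> \<Omega>"
  shows "mat_exp \<Omega> A x y \<le> mat_exp \<Omega> B x y"
  by (rule sums_le[OF _ mat_exp_sums[OF fin x] mat_exp_sums[OF fin x]])
    (use mat_pow_mono[OF AB x y] in \<open>simp add: divide_right_mono\<close>)

lemma mat_exp_diag_shift:
  fixes M :: "'a \<Rightarrow> 'a \<Rightarrow> real"
  assumes fin: "finite \<Omega>" and sym: "\<forall>y\<in>\<Omega>. \<forall>z\<in>\<Omega>. M y z = M z y" and x: "x \<in> \<Omega>"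
  shows "mat_exp \<Omega> (\<lambda>y z. M y z + (if y = z then s else 0)) x x = exp s * mat_exp \<Omega> M x x"
proof -
  obtain b lam where eb: "eigenbasis \<Omega> (\<lambda>y z. of_real (M y z)) b lam"
    using symmetric_matrix_eigenbasis[OF fin sym] by blast
  have "eigenbasis \<Omega> (\<lambda>y z. of_real (M y z + (if y = z then s else 0))) b (\<lambda>i. 1 * lam i + s)"
    by (rule eigenbasis_affine[OF fin eb]) simp
  from mat_exp_diag_eigen[OF fin this x] mat_exp_diag_eigen[OF fin eb x] show ?thesis
    by (simp add: exp_add sum_distrib_left mult_ac)
qed

text \<open>After a diagonal shift by \<open>s\<close> both matrices are entrywise nonnegative, where the
  exponential is monotone; the shift only contributes the common factor \<open>exp s\<close>.\<close>

lemma mat_exp_diag_mono_potential: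
  fixes M :: "'a \<Rightarrow> 'a \<Rightarrow> real"
  assumes fin: "finite \<Omega>" and sym: "\<forall>y\<in>\<Omega>. \<forall>z\<in>\<Omega>. M y z = M z y"
    and offdiag: "\<forall>y\<in>\<Omega>. \<forall>z\<in>\<Omega>. y \<noteq> z \<longrightarrow> 0 \<le> M y z"
    and W: "\<forall>y\<in>\<Omega>. W\<^sub>1 y \<le> W\<^sub>2 y" and x: "x \<in> \<Omega>"
  shows "mat_exp \<Omega> (\<lambda>y z. M y z + (if y = z then W\<^sub>1 y else 0)) x x
       \<le> mat_exp \<Omega> (\<lambda>y z. M y z + (if y = z then W\<^sub>2 y else 0)) x x"
proof -
  define s where "s = (\<Sum>y\<in>\<Omega>. \<bar>M y y\<bar> + \<bar>W\<^sub>1 y\<bar>)"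
  define A where "A W y z = M y z + (if y = z then W y else 0)" for W :: "'a \<Rightarrow> real" and y z
  have A_sym: "\<forall>y\<in>\<Omega>. \<forall>z\<in>\<Omega>. A W y z = A W z y" for W using sym by (simp add: A_def)
  have s_bound: "\<bar>M y y\<bar> + \<bar>W\<^sub>1 y\<bar> \<le> s" if "y \<in> \<Omega>" for y
    unfolding s_def using fin that by (intro member_le_sum) auto
  have "0 \<le> A W\<^sub>1 y z + (if y = z then s else 0)
              \<and> A W\<^sub>1 y z + (if y = z then s else 0) \<le> A W\<^sub>2 y z + (if y = z then s else 0)"
    if "y \<in> \<Omega>" "z \<in> \<Omega>" for y z
    using that offdiag W s_bound[of y] abs_ge_minus_self[of "M y y"] abs_ge_minus_self[of "W\<^sub>1 y"]
    by (cases "y = z") (auto simp: A_def)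
  then have "mat_exp \<Omega> (\<lambda>y z. A W\<^sub>1 y z + (if y = z then s else 0)) x x
           \<le> mat_exp \<Omega> (\<lambda>y z. A W\<^sub>2 y z + (if y = z then s else 0)) x x"
    using fin x by (intro mat_exp_mono) auto
  then have "exp s * mat_exp \<Omega> (A W\<^sub>1) x x \<le> exp s * mat_exp \<Omega> (A W\<^sub>2) x x"
    by (simp only: mat_exp_diag_shift[OF fin A_sym x])
  then have "mat_exp \<Omega> (A W\<^sub>1) x x \<le> mat_exp \<Omega> (A W\<^sub>2) x x" by simp
  then show ?thesis unfolding A_def[abs_def] .
qed

section \<open>The Schroedinger operator on the torus\<close>

lemma finite_torus: "finite (torus L d)"
proof -
  have "torus L d \<subseteq> {xs. set xs \<subseteq> {0..<int L} \<and> length xs = d}"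
    unfolding torus_def by (auto simp: in_set_conv_nth)
  then show ?thesis by (rule finite_subset) (simp add: finite_lists_length_eq)
qed

lemma hop_commute: "hop L d y z = hop L d z y"
  by (simp add: hop_def tdist1_def cdist_def min.commute)

lemma lap_commute: "lap L d y z = lap L d z y"
  by (simp add: lap_def hop_commute)

lemma hop_nonneg: "hop L d y z \<ge> 0"
  by (simp add: hop_def)

lemma hop_self: "hop L d y y = 0"
  by (simp add: hop_def tdist1_def cdist_def)

lemma cdist_eq_0D:
  assumes "0 \<le> a" "a < int L" "0 \<le> b" "b < int L" "cdist L a b = 0"
  shows "a = b"
proof -
  have "(a - b) mod int L = 0 \<or> (b - a) mod int L = 0"
    using assms(5) by (auto simp: cdist_def min_def split: if_splits)
  then have "a mod int L = b mod int L" by (auto simp: mod_eq_dvd_iff dvd_diff_commute)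
  then show ?thesis using assms(1-4) by simp
qed

lemma cdist_eq_1D:
  assumes "0 \<le> b" "b < int L" "cdist L a b = 1"
  shows "b = (a + 1) mod int L \<or> b = (a - 1) mod int L"
proof -
  have "(a - b) mod int L = 1 \<or> (b - a) mod int L = 1"
    using assms(3) by (auto simp: cdist_def min_def split: if_splits)
  moreover have "(a - 1) mod int L = ((a - b) mod int L + (b - 1)) mod int L"
    by (simp add: mod_add_left_eq)
  moreover have "b mod int L = ((b - a) mod int L + a) mod int L"
    by (simp add: mod_add_left_eq)
  ultimately have "b mod int L = (a - 1) mod int L \<or> b mod int L = (a + 1) mod int L"
    by (auto simp: add.commute)
  then show ?thesis using assms(1,2) by auto
qed

lemma torus_neighbour:
  assumes L: "L > 0" and y: "y \<in> torus L d" and z: "z \<in> torus L d" and yz: "tdist1 L d y z = 1"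
  shows "\<exists>i<d. z = y[i := (y ! i + 1) mod int L] \<or> z = y[i := (y ! i - 1) mod int L]"
proof -
  define c where "c i = cdist L (y ! i) (z ! i)" for i
  have c_nonneg: "c i \<ge> 0" for i using L by (simp add: c_def cdist_def)
  have c_sum: "(\<Sum>i<d. c i) = 1" using yz by (simp add: tdist1_def c_def)
  then obtain i where i: "i < d" and "c i \<noteq> 0" by (metis sum.neutral lessThan_iff zero_neq_one)
  moreover have "c i + (\<Sum>j\<in>{..<d} - {i}. c j) = 1"
    using c_sum i by (simp add: sum.remove)
  moreover have "(\<Sum>j\<in>{..<d} - {i}. c j) \<ge> 0" by (simp add: sum_nonneg c_nonneg)
  ultimately have ci: "c i = 1" and rest: "(\<Sum>j\<in>{..<d} - {i}. c j) = 0"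
    using c_nonneg[of i] by linarith+
  have y_len: "length y = d" and z_len: "length z = d"
    and y_range: "\<forall>j<d. 0 \<le> y ! j \<and> y ! j < int L"
    and z_range: "\<forall>j<d. 0 \<le> z ! j \<and> z ! j < int L"
    using y z by (auto simp: torus_def)
  have "z ! j = y ! j" if "j < d" "j \<noteq> i" for j
  proof -
    have "c j = 0" using rest sum_nonneg_eq_0_iff[of "{..<d} - {i}" c] c_nonneg that by auto
    then show ?thesis using cdist_eq_0D y_range z_range that by (metis c_def)
  qed
  then have "z = y[i := z ! i]"
    using y_len z_len i by (intro nth_equalityI) (auto simp: nth_list_update)
  moreover have "z ! i = (y ! i + 1) mod int L \<or> z ! i = (y ! i - 1) mod int L"
    using cdist_eq_1D ci z_range i by (simp add: c_def)
  ultimately show ?thesis using i by metis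
qed

lemma torus_degree_le:
  assumes L: "L > 0" and \<Omega>: "\<Omega> \<subseteq> torus L d" and y: "y \<in> torus L d"
  shows "(\<Sum>z\<in>\<Omega>. hop L d y z) \<le> 2 * real d"
proof -
  define N where "N = (\<Union>i<d. {y[i := (y ! i + 1) mod int L], y[i := (y ! i - 1) mod int L]})"
  have fin: "finite \<Omega>" using \<Omega> finite_torus finite_subset by blast
  have "(\<Sum>z\<in>\<Omega>. hop L d y z) = real (card {z\<in>\<Omega>. tdist1 L d y z = 1})"
    unfolding hop_def sum.inter_filter[OF fin, symmetric] by simp
  also have "card {z\<in>\<Omega>. tdist1 L d y z = 1} \<le> card N"
    using torus_neighbour[OF L y] \<Omega> by (intro card_mono) (auto simp: N_def)
  also have "card N \<le> (\<Sum>i<d. card {y[i := (y ! i + 1) mod int L], y[i := (y ! i - 1) mod int L]})"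
    unfolding N_def by (rule card_UN_le) simp
  also have "\<dots> \<le> (\<Sum>i<d. 2)" by (intro sum_mono) (simp add: card_insert_if)
  finally show ?thesis by simp
qed

lemma gershgorin:
  fixes M :: "'a \<Rightarrow> 'a \<Rightarrow> complex"
  assumes fin: "finite \<Omega>" and ev: "\<forall>y\<in>\<Omega>. (\<Sum>z\<in>\<Omega>. M y z * b z) = c * b y"
    and nz: "\<exists>y\<in>\<Omega>. b y \<noteq> 0"
  shows "\<exists>y\<in>\<Omega>. cmod (c - M y y) \<le> (\<Sum>z\<in>\<Omega> - {y}. cmod (M y z))"
proof -
  have "Max ((\<lambda>z. cmod (b z)) ` \<Omega>) \<in> (\<lambda>z. cmod (b z)) ` \<Omega>"
    using fin nz by (intro Max_in) auto
  then obtain y where y: "y \<in> \<Omega>" and y_m: "cmod (b y) = Max ((\<lambda>z. cmod (b z)) ` \<Omega>)"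
    by (metis imageE)
  have y_max: "\<forall>z\<in>\<Omega>. cmod (b z) \<le> cmod (b y)"
    using fin by (simp add: y_m)
  obtain y' where "y' \<in> \<Omega>" "b y' \<noteq> 0" using nz by blast
  then have m: "cmod (b y) > 0" using y_max by (metis zero_less_norm_iff order_less_le_trans)
  have "(c - M y y) * b y = (\<Sum>z\<in>\<Omega> - {y}. M y z * b z)"
    using ev y fin by (simp add: sum.remove algebra_simps)
  then have "cmod (c - M y y) * cmod (b y) = cmod (\<Sum>z\<in>\<Omega> - {y}. M y z * b z)"
    by (simp flip: norm_mult)
  also have "\<dots> \<le> (\<Sum>z\<in>\<Omega> - {y}. cmod (M y z) * cmod (b z))"
    unfolding norm_mult[symmetric] by (rule norm_sum)
  also have "\<dots> \<le> (\<Sum>z\<in>\<Omega> - {y}. cmod (M y z)) * cmod (b y)"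
    unfolding sum_distrib_right using y_max by (intro sum_mono mult_left_mono) auto
  finally show ?thesis using m y by auto
qed

lemma schroedinger_eigenvalue_ge:
  fixes V :: "int list \<Rightarrow> real"
  assumes L: "L > 0" and \<Omega>: "\<Omega> \<subseteq> torus L d" and V: "\<forall>y\<in>\<Omega>. V y \<le> \<mu>"
    and eb: "eigenbasis \<Omega> (\<lambda>y z. of_real (- lap L d y z - (if y = z then V y else 0))) b lam"
    and i: "i \<in> \<Omega>"
  shows "lam i \<ge> - \<mu>"
proof -
  have fin: "finite \<Omega>" using \<Omega> finite_torus finite_subset by blast
  define H where "H y z = - lap L d y z - (if y = z then V y else 0)" for y z
  have "cinner \<Omega> (b i) (b i) = 1" using eb i by (simp add: eigenbasis_def)
  then have nz: "\<exists>y\<in>\<Omega>. b i y \<noteq> 0"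
    by (metis (no_types, lifting) cinner_def mult_zero_left sum.neutral zero_neq_one)
  have "\<forall>y\<in>\<Omega>. (\<Sum>z\<in>\<Omega>. of_real (H y z) * b i z) = of_real (lam i) * b i y"
    using eb i by (simp add: eigenbasis_def H_def)
  from gershgorin[OF fin this nz] obtain y where y: "y \<in> \<Omega>"
    and "cmod (of_real (lam i) - of_real (H y y)) \<le> (\<Sum>z\<in>\<Omega> - {y}. cmod (of_real (H y z)))"
    by blast
  moreover have "H y y = 2 * real d - V y" by (simp add: H_def lap_def hop_self)
  ultimately have "\<bar>lam i - (2 * real d - V y)\<bar> \<le> (\<Sum>z\<in>\<Omega> - {y}. \<bar>H y z\<bar>)"
    by (simp only: of_real_diff[symmetric] norm_of_real)
  also have "\<dots> = (\<Sum>z\<in>\<Omega> - {y}. hop L d y z)"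
    by (intro sum.cong) (auto simp: H_def lap_def hop_nonneg)
  also have "\<dots> \<le> (\<Sum>z\<in>\<Omega>. hop L d y z)"
    using fin by (intro sum_mono2) (auto simp: hop_nonneg)
  also have "\<dots> \<le> 2 * real d" using torus_degree_le[OF L \<Omega>] \<Omega> y by blast
  finally have "\<bar>lam i - (2 * real d - V y)\<bar> \<le> 2 * real d" .
  moreover have "V y \<le> \<mu>" using V y by blast
  ultimately show ?thesis by (simp add: abs_le_iff)
qed

lemma mat_exp_diag_le_neg_spectral_weight:
  fixes H :: "'a \<Rightarrow> 'a \<Rightarrow> real"
  assumes fin: "finite \<Omega>" and eb: "eigenbasis \<Omega> (\<lambda>y z. of_real (H y z)) b lam"
    and lam: "\<forall>i\<in>\<Omega>. lam i \<ge> - \<mu>" and \<beta>: "\<beta> \<ge> 0" and x: "x \<in> \<Omega>"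
  shows "mat_exp \<Omega> (\<lambda>y z. - \<beta> * H y z) x x
       \<le> exp (\<beta> * \<mu>) * (\<Sum>i\<in>{i\<in>\<Omega>. lam i < 0}. (cmod (b i x))\<^sup>2) + 1"
proof -
  define w where "w i = (cmod (b i x))\<^sup>2" for i
  have "eigenbasis \<Omega> (\<lambda>y z. of_real (- \<beta> * H y z)) b (\<lambda>i. - \<beta> * lam i + 0)"
    by (rule eigenbasis_affine[OF fin eb]) simp
  then have "mat_exp \<Omega> (\<lambda>y z. - \<beta> * H y z) x x = (\<Sum>i\<in>\<Omega>. exp (- \<beta> * lam i) * w i)"
    unfolding w_def using mat_exp_diag_eigen[OF fin _ x] by simp
  also have "\<dots> \<le> (\<Sum>i\<in>\<Omega>. exp (\<beta> * \<mu>) * (if lam i < 0 then w i else 0) + w i)"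
  proof (rule sum_mono)
    fix i assume "i \<in> \<Omega>"
    then have "\<beta> * (- lam i) \<le> \<beta> * \<mu>" using lam \<beta> by (intro mult_left_mono) auto
    then have "exp (- \<beta> * lam i) \<le> (if lam i < 0 then exp (\<beta> * \<mu>) else 1)"
      using \<beta> by (auto simp: mult_le_0_iff)
    moreover have "w i \<ge> 0" by (simp add: w_def)
    ultimately show "exp (- \<beta> * lam i) * w i \<le> exp (\<beta> * \<mu>) * (if lam i < 0 then w i else 0) + w i"
      by (cases "lam i < 0") (simp_all add: mult_right_mono add_increasing2 mult_left_le_one_le)
  qed
  also have "\<dots> = exp (\<beta> * \<mu>) * (\<Sum>i\<in>{i\<in>\<Omega>. lam i < 0}. w i) + (\<Sum>i\<in>\<Omega>. w i)"
    by (simp add: sum.distrib sum_distrib_left sum.inter_filter[OF fin])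
  also have "(\<Sum>i\<in>\<Omega>. w i) = 1"
  proof -
    have "of_real (\<Sum>i\<in>\<Omega>. w i) = (\<Sum>i\<in>\<Omega>. cnj (b i x) * b i x)"
      unfolding w_def of_real_sum_norm_square by (simp add: mult.commute)
    also have "\<dots> = 1"
      using orthonormal_resolution_of_identity[OF fin _ x x] eb by (simp add: eigenbasis_def)
    finally show ?thesis by (simp only: of_real_eq_1_iff)
  qed
  finally show ?thesis by (simp add: w_def)
qed

lemma mat_exp_lap_potential_lower_bound:
  fixes V :: "int list \<Rightarrow> real"
  assumes fin: "finite \<Omega>" and V: "\<forall>y\<in>\<Omega>. c \<le> V y" and \<beta>: "\<beta> \<ge> 0" and x: "x \<in> \<Omega>"
  shows "exp (\<beta> * c) * mat_exp \<Omega> (\<lambda>y z. \<beta> * lap L d y z) x x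
       \<le> mat_exp \<Omega> (\<lambda>y z. \<beta> * lap L d y z + (if y = z then \<beta> * V y else 0)) x x"
proof -
  have "exp (\<beta> * c) * mat_exp \<Omega> (\<lambda>y z. \<beta> * lap L d y z) x x
      = mat_exp \<Omega> (\<lambda>y z. \<beta> * lap L d y z + (if y = z then \<beta> * c else 0)) x x"
    using mat_exp_diag_shift[OF fin _ x] by (simp add: lap_commute)
  also have "\<dots> \<le> mat_exp \<Omega> (\<lambda>y z. \<beta> * lap L d y z + (if y = z then \<beta> * V y else 0)) x x"
    using mat_exp_diag_mono_potential[OF fin, of "\<lambda>y z. \<beta> * lap L d y z" "\<lambda>_. \<beta> * c"] V \<beta> x
    by (simp add: lap_commute lap_def hop_nonneg mult_left_mono)
  finally show ?thesis .
qed

lemma heat_kernel_diag_le_neg_spectral_proj: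
  fixes V :: "int list \<Rightarrow> real"
  assumes L: "L > 0" and \<Omega>: "\<Omega> \<subseteq> torus L d" and V: "\<forall>y\<in>\<Omega>. V y \<le> \<mu>"
    and \<beta>: "\<beta> \<ge> 0" and x: "x \<in> \<Omega>"
  shows "mat_exp \<Omega> (\<lambda>y z. \<beta> * lap L d y z + (if y = z then \<beta> * V y else 0)) x x
       \<le> exp (\<beta> * \<mu>) * Re (neg_spectral_proj \<Omega>
             (\<lambda>y z. complex_of_real (- lap L d y z - (if y = z then V y else 0))) x x) + 1"
proof -
  have fin: "finite \<Omega>" using \<Omega> finite_torus finite_subset by blast
  define H where "H y z = - lap L d y z - (if y = z then V y else 0)" for y z
  have "\<forall>y\<in>\<Omega>. \<forall>z\<in>\<Omega>. H y z = H z y" by (simp add: H_def lap_commute)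
  then obtain b lam where eb: "eigenbasis \<Omega> (\<lambda>y z. of_real (H y z)) b lam"
    and \<rho>: "Re (neg_spectral_proj \<Omega> (\<lambda>y z. of_real (H y z)) x x)
            = (\<Sum>i\<in>{i\<in>\<Omega>. lam i < 0}. (cmod (b i x))\<^sup>2)"
    using neg_spectral_proj_diag[OF fin] by blast
  have "\<forall>i\<in>\<Omega>. lam i \<ge> - \<mu>"
    using schroedinger_eigenvalue_ge[OF L \<Omega> V] eb unfolding H_def by blast
  from mat_exp_diag_le_neg_spectral_weight[OF fin eb this \<beta> x]
  have "mat_exp \<Omega> (\<lambda>y z. - \<beta> * H y z) x x
      \<le> exp (\<beta> * \<mu>) * Re (neg_spectral_proj \<Omega> (\<lambda>y z. of_real (H y z)) x x) + 1"
    unfolding \<rho> .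
  moreover have "(\<lambda>y z. - \<beta> * H y z) = (\<lambda>y z. \<beta> * lap L d y z + (if y = z then \<beta> * V y else 0))"
    by (auto simp: H_def fun_eq_iff algebra_simps)
  ultimately show ?thesis unfolding H_def by simp
qed

theorem mainTheorem8:
  fixes L d :: nat and \<mu> \<beta> :: real and \<Omega> :: "int list set"
    and V :: "int list \<Rightarrow> real" and x :: "int list"
  assumes "L > 0"
    and "\<mu> > 0"
    and "\<Omega> \<subseteq> torus L d"
    and "\<forall>y\<in>\<Omega>. \<mu> / 2 \<le> V y \<and> V y \<le> \<mu>"
    and "x \<in> \<Omega>"
    and "\<beta> > 0"
  shows "Re (neg_spectral_proj \<Omega>
             (\<lambda>y z. complex_of_real (- lap L d y z - (if y = z then V y else 0))) x x)
         \<ge> exp (- \<beta> * \<mu> / 2) * (mat_exp \<Omega> (\<lambda>y z. \<beta> * lap L d y z) x x - exp (- \<beta> * \<mu> / 2))"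
proof -
  note L = assms(1) and \<Omega> = assms(3) and V = assms(4) and x = assms(5) and \<beta> = assms(6)
  have fin: "finite \<Omega>" using \<Omega> finite_torus finite_subset by blast
  define E where "E = mat_exp \<Omega> (\<lambda>y z. \<beta> * lap L d y z) x x"
  define \<rho> where "\<rho> = Re (neg_spectral_proj \<Omega>
             (\<lambda>y z. complex_of_real (- lap L d y z - (if y = z then V y else 0))) x x)"
  have "exp (\<beta> * (\<mu> / 2)) * E
      \<le> mat_exp \<Omega> (\<lambda>y z. \<beta> * lap L d y z + (if y = z then \<beta> * V y else 0)) x x"
    unfolding E_def using V \<beta> by (intro mat_exp_lap_potential_lower_bound[OF fin _ _ x]) auto
  also have "\<dots> \<le> exp (\<beta> * \<mu>) * \<rho> + 1"
    unfolding \<rho>_def using V \<beta> by (intro heat_kernel_diag_le_neg_spectral_proj[OF L \<Omega> _ _ x]) auto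
  finally have "exp (- \<beta> * \<mu>) * (exp (\<beta> * (\<mu> / 2)) * E) \<le> exp (- \<beta> * \<mu>) * (exp (\<beta> * \<mu>) * \<rho> + 1)"
    by (intro mult_left_mono) auto
  then have "exp (- \<beta> * \<mu> / 2) * E \<le> \<rho> + exp (- \<beta> * \<mu>)"
    by (simp add: distrib_left mult.assoc[symmetric] flip: exp_add)
  then show ?thesis
    unfolding \<rho>_def[symmetric] E_def[symmetric] by (simp add: right_diff_distrib flip: exp_add)
qed

end
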